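(* Let $\ell \ge 1$, $L = 2^\ell$, and let $s$ be an integer with $0 \le s < \ell$. Let $a \in \mathbb{Z}_L$ and let $\langle a\rangle_0, \langle a\rangle_1 \in \mathbb{Z}_L$ satisfy $\langle a\rangle_0 + \langle a\rangle_1 = a$ in $\mathbb{Z}_L$. Let $a_u, a_0, a_1 \in \{0,1,\ldots,2^\ell-1\}$ be the unsigned representatives of $a, \langle a\rangle_0, \langle a\rangle_1$, and write $a_0 = a_0^1\cdot 2^s + a_0^0$, $a_1 = a_1^1 \cdot 2^s + a_1^0$ with $a_0^1,a_0^0,a_1^1,a_1^0\in\mathbb{Z}$ and $0 \le a_0^0, a_1^0 < 2^s$. With $n' = 2^{\ell-1}$, define $$\mathsf{corr} = \begin{cases} -1 & \text{if } (a_u \ge n') \wedge (a_0 < n') \wedge (a_1 < n'),\\ 1 & \text{if } (a_u < n') \wedge (a_0 \ge n') \wedge (a_1 \ge n'),\\ 0 & \text{otherwise.}\end{cases}$$ Then $$(\langle a\rangle_0 \gg s) + (\langle a\rangle_1 \gg s) + \mathsf{corr}\cdot 2^{\ell-s} + \mathbf{1}\{a_0^0 + a_1^0 \ge 2^s\} \equiv (a \gg s) \pmod{L}.$$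
   Context: $\mathbf{1}\{P\}$ is the indicator of $P$. For $x \in \mathbb{Z}_L$ with unsigned representative $x_u \in\{0,\ldots,2^\ell-1\}$, $x \gg s$ denotes the arithmetic right shift by $s$, i.e. $\lfloor (x_u - \mathbf{1}\{x_u \ge 2^{\ell-1}\}\cdot 2^\ell)/2^s \rfloor \bmod 2^\ell$ (floor division of the two's-complement signed value of $x$ by $2^s$, reduced mod $2^\ell$). The sum in the conclusion is taken in $\mathbb{Z}_L$. *)

theory Defs
  imports "HOL-Number_Theory.Cong"
begin

text \<open>Elements of Z_L (L = 2^l) are represented by integers; equality in Z_L is
  congruence modulo 2^l.\<close>

definition urep :: "nat \<Rightarrow> int \<Rightarrow> int" where
  "urep l x = x mod 2 ^ l"

text \<open>Arithmetic right shift by s on l-bit two's complement: floor division of the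
  signed value by 2^s, reduced mod 2^l.\<close>
definition ashr :: "nat \<Rightarrow> nat \<Rightarrow> int \<Rightarrow> int" where
  "ashr l s x = ((urep l x - (if urep l x \<ge> 2 ^ (l - 1) then 2 ^ l else 0)) div 2 ^ s) mod 2 ^ l"

definition corr :: "nat \<Rightarrow> int \<Rightarrow> int \<Rightarrow> int \<Rightarrow> int" where
  "corr l au a0 a1 =
     (if au \<ge> 2 ^ (l - 1) \<and> a0 < 2 ^ (l - 1) \<and> a1 < 2 ^ (l - 1) then -1
      else if au < 2 ^ (l - 1) \<and> a0 \<ge> 2 ^ (l - 1) \<and> a1 \<ge> 2 ^ (l - 1) then 1
      else 0)"

end

theory Submission
  imports Defs
begin

text \<open>Read every share through its two's-complement signed value. The signed values
  of the shares add up to the signed value of \<open>a\<close> up to a multiple \<open>corr\<close> of \<open>2^l\<close>,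
  the wrap-around being detected by the most significant bits. Flooring by \<open>2^s\<close>
  carries this multiple over as \<open>corr * 2^(l-s)\<close>, and splits the floor of a sum into
  the sum of the floors plus the carry out of the low \<open>s\<close> bits.\<close>

definition sval :: "nat \<Rightarrow> int \<Rightarrow> int" where
  "sval l x = urep l x - (if urep l x \<ge> 2 ^ (l - 1) then 2 ^ l else 0)"

lemma ashr_eq_sval_div: "ashr l s x = sval l x div 2 ^ s mod 2 ^ l"
  unfolding ashr_def sval_def ..

lemma sval_mod_pow2:
  assumes "s \<le> l"
  shows "sval l x mod 2 ^ s = urep l x mod 2 ^ s"
proof -
  have "sval l x = urep l x + (- (if urep l x \<ge> 2 ^ (l - 1) then 2 ^ (l - s) else 0)) * 2 ^ s"
    using assms unfolding sval_def by (simp flip: power_add)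
  then show ?thesis
    by (simp only: mod_mult_self1)
qed

lemma urep_nonneg: "0 \<le> urep l x"
  by (simp add: urep_def)

lemma urep_less: "urep l x < 2 ^ l"
  by (simp add: urep_def)

lemma urep_add_cases:
  assumes "[x0 + x1 = a] (mod 2 ^ l)"
  obtains "urep l x0 + urep l x1 = urep l a"
        | "urep l x0 + urep l x1 = urep l a + 2 ^ l"
proof -
  define u where "u = urep l x0 + urep l x1"
  have "u mod 2 ^ l = urep l a"
    using assms unfolding u_def urep_def cong_def by (simp add: mod_add_eq)
  have "0 \<le> u" "u < 2 * 2 ^ l"
    unfolding u_def
    using urep_nonneg[of l x0] urep_nonneg[of l x1] urep_less[of l x0] urep_less[of l x1]
    by linarith+
  consider "u < 2 ^ l" | "2 ^ l \<le> u"
    by linarith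
  then show thesis
  proof cases
    case 1
    then have "u = urep l a"
      using \<open>0 \<le> u\<close> \<open>u mod 2 ^ l = urep l a\<close> by simp
    then show thesis
      unfolding u_def by (rule that(1))
  next
    case 2
    have "urep l a = (u - 2 ^ l) mod 2 ^ l"
      using \<open>u mod 2 ^ l = urep l a\<close> by simp
    also have "\<dots> = u - 2 ^ l"
      using 2 \<open>u < 2 * 2 ^ l\<close> by (intro mod_pos_pos_trivial) auto
    finally show thesis
      unfolding u_def by (intro that(2)) simp
  qed
qed

lemma sval_add:
  assumes "l \<ge> 1" and "[x0 + x1 = a] (mod 2 ^ l)"
  shows "sval l x0 + sval l x1 + corr l (urep l a) (urep l x0) (urep l x1) * 2 ^ l
           = sval l a"
proof -
  have half: "(2::int) ^ l = 2 * 2 ^ (l - 1)"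
    using assms(1) by (simp flip: power_Suc)
  have ranges: "0 \<le> urep l x" "urep l x < 2 * 2 ^ (l - 1)" for x
    using urep_nonneg urep_less half by metis+
  from assms(2) show ?thesis
    by (cases rule: urep_add_cases)
      (use half ranges[of x0] ranges[of x1] ranges[of a] in \<open>auto simp: sval_def corr_def\<close>)
qed

lemma div_add_remainders:
  fixes r0 r1 m :: int
  assumes "0 \<le> r0" "r0 < m" "0 \<le> r1" "r1 < m"
  shows "(r0 + r1) div m = (if r0 + r1 \<ge> m then 1 else 0)"
  using assms div_pos_geq[of m "r0 + r1"] by auto

theorem corollary4p2:
  fixes l s :: nat and a x0 x1 a01 a00 a11 a10 :: int
  assumes "l \<ge> 1" and "s < l"
    and "[x0 + x1 = a] (mod 2 ^ l)"
    and "urep l x0 = a01 * 2 ^ s + a00" and "0 \<le> a00" and "a00 < 2 ^ s"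
    and "urep l x1 = a11 * 2 ^ s + a10" and "0 \<le> a10" and "a10 < 2 ^ s"
  shows "[ashr l s x0 + ashr l s x1
            + corr l (urep l a) (urep l x0) (urep l x1) * 2 ^ (l - s)
            + (if a00 + a10 \<ge> 2 ^ s then 1 else 0)
          = ashr l s a] (mod 2 ^ l)"
proof -
  define cr where "cr = corr l (urep l a) (urep l x0) (urep l x1)"
  define carry :: int where "carry = (if a00 + a10 \<ge> 2 ^ s then 1 else 0)"
  have low0: "sval l x0 mod 2 ^ s = a00" and low1: "sval l x1 mod 2 ^ s = a10"
    using assms(2,4-9) by (simp_all add: sval_mod_pow2)
  have "(2::int) ^ l = 2 ^ (l - s) * 2 ^ s"
    using assms(2) by (simp flip: power_add)
  then have "sval l a = sval l x0 + sval l x1 + cr * 2 ^ (l - s) * 2 ^ s"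
    using sval_add[OF assms(1,3)] unfolding cr_def by (simp add: mult.assoc)
  then have "sval l a div 2 ^ s = (sval l x0 + sval l x1) div 2 ^ s + cr * 2 ^ (l - s)"
    by simp
  also have "\<dots> = sval l x0 div 2 ^ s + sval l x1 div 2 ^ s + cr * 2 ^ (l - s) + carry"
    using div_add_remainders[OF assms(5,6,8,9)]
    by (simp add: div_add1_eq[of "sval l x0"] low0 low1 carry_def)
  finally have "[sval l x0 div 2 ^ s + sval l x1 div 2 ^ s + cr * 2 ^ (l - s) + carry
                   = ashr l s a] (mod 2 ^ l)"
    by (simp add: ashr_eq_sval_div cong_def)
  moreover have "[ashr l s x0 + ashr l s x1 + cr * 2 ^ (l - s) + carry
                   = sval l x0 div 2 ^ s + sval l x1 div 2 ^ s + cr * 2 ^ (l - s) + carry] (mod 2 ^ l)"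
    by (intro cong_add cong_refl) (simp_all add: ashr_eq_sval_div cong_def)
  ultimately show ?thesis
    unfolding cr_def carry_def by (rule cong_trans[rotated])
qed

end
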